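(* Let $n$ be odd, $k$ a positive integer with $\gcd(k,n)=1$, $q=2^k$, and $c\in\mathbb{F}_{2^n}$. If the equation $(v+1)^{q+1}+cv=0$ has three distinct solutions $v\in\mathbb{F}_{2^n}$, then every such solution $v$ satisfies $\operatorname{Tr}\!\left(v^{-1/(q-1)}\right)=0$. More precisely, in that case there is $u\in\mathbb{F}_{2^n}\setminus\mathbb{F}_2$ such that the three solutions are $$v_1=\frac{1}{(u+u^q)^{q^2-q}},\quad v_2=\frac{u^{q^3-q}}{(u+u^q)^{q^2-q}},\quad v_3=\frac{(u+1)^{q^3-q}}{(u+u^q)^{q^2-q}},$$ and $v_1^{-1/(q-1)}=u^q+u^{q^2}$, $v_2^{-1/(q-1)}=u^{-q}+u^{-q^2}$, $v_3^{-1/(q-1)}=(u+1)^{-q}+(u+1)^{-q^2}$.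
   Context: $\operatorname{Tr}$ is the absolute trace from $\mathbb{F}_{2^n}$ to $\mathbb{F}_2$. Since $\gcd(q-1,2^n-1)=1$, $v^{1/(q-1)}$ denotes the unique $w\in\mathbb{F}_{2^n}$ with $w^{q-1}=v$, and $v^{-1/(q-1)}=1/v^{1/(q-1)}$ for $v\ne0$. *)

theory Defs
  imports Main "HOL-Computational_Algebra.Primes" "HOL-Library.Cardinality"
begin

definition abs_trace :: "nat \<Rightarrow> 'a::field \<Rightarrow> 'a" where
  "abs_trace n x = (\<Sum>i<n. x ^ (2 ^ i))"

definition root_qm1 :: "nat \<Rightarrow> 'a::field \<Rightarrow> 'a" where
  "root_qm1 q v = (THE w. w ^ (q - 1) = v)"

definition invroot_qm1 :: "nat \<Rightarrow> 'a::field \<Rightarrow> 'a" where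
  "invroot_qm1 q v = inverse (root_qm1 q v)"

end

theory Submission
  imports Defs
begin

text \<open>
  Fix a root v1. In characteristic 2 the substitution v = v1 + (v1 + 1) / y turns
  (v + 1)^(q+1) + c v = 0 into the affine equation y^q + v1 y + v1 = 0, whose roots form a coset
  of the solutions of d^q = v1 d. Since gcd(k, n) = 1 the map x \<mapsto> x^(q-1) is injective, so
  the coset is {y0, y0 + d} for the unique nonzero d. With p = 1/d and m = y0/d one gets
  m^q + m = p, and the three roots are the (q-1)-th powers of 1/p, m^(q+1)/p and
  (m+1)^(q+1)/p. So v^(-1/(q-1)) is one of m + m^q, 1/m + 1/m^q, 1/(m+1) + 1/(m+1)^q, each of
  the form x + x^q and hence of trace zero; writing m = u^q gives the stated formulas.
\<close>

subsection \<open>Fields of characteristic 2 and order 2^n\<close>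

lemma add_self_CHAR_2:
  assumes "CHAR('a::ring_1) = 2"
  shows "x + x = (0::'a)"
  using uminus_CHAR_2[OF assms, of x] by (metis add.right_inverse)

lemma add_eq_0_iff_CHAR_2:
  assumes "CHAR('a::ring_1) = 2"
  shows "x + y = (0::'a) \<longleftrightarrow> x = y"
  using uminus_CHAR_2[OF assms] add_eq_0_iff2 by metis

lemma frobenius_add_CHAR_2:
  assumes "CHAR('a::comm_ring_1) = 2" "q = 2 ^ k"
  shows "(x + y :: 'a) ^ q = x ^ q + y ^ q"
  using freshmans_dream'[of q k x y] assms by simp

lemma CHAR_eq_2_if_card:
  assumes "CARD('a::{field,finite}) = 2 ^ n" "n > 0"
  shows "CHAR('a) = 2"
proof (rule CHAR_eq_posI)
  \<comment> \<open>Translation by 1 permutes the field, so summing over it gives CARD('a) \<cdot> 1 = 0.\<close>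
  have "(\<Sum>x\<in>UNIV. x + 1) = (\<Sum>x\<in>(UNIV::'a set). x)"
    by (rule sum.reindex_bij_witness[where i="\<lambda>x. x - 1" and j="\<lambda>x. x + 1"]) auto
  then have "of_nat CARD('a) = (0::'a)"
    by (simp add: sum.distrib)
  then have "(2::'a) ^ n = 0"
    using assms(1) by simp
  then show "of_nat 2 = (0::'a)"
    by simp
next
  fix x :: nat
  assume "0 < x" "x < 2"
  then show "of_nat x \<noteq> (0::'a)"
    by (simp add: less_2_cases_iff)
qed simp

lemma power_card_eq_self:
  "(x::'a::{field,finite}) ^ CARD('a) = x"
proof (cases "x = 0")
  case False
  have "(\<Prod>y\<in>UNIV-{0}. x * y) = (\<Prod>y\<in>UNIV-{0::'a}. y)"
    by (rule prod.reindex_bij_witness[where i="\<lambda>y. y / x" and j="\<lambda>y. x * y"]) (use False in auto)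
  then have "x ^ (CARD('a) - 1) = 1"
    by (simp add: prod.distrib card_Diff_singleton)
  then show ?thesis
    by (metis Suc_diff_1 finite_UNIV_card_ge_0 finite power_Suc2 mult_1)
qed simp

lemma power_two_power_mult_eq_self:
  assumes "x ^ (2 ^ j) = (x::'a::monoid_mult)"
  shows "x ^ (2 ^ (j * a)) = x"
proof (induction a)
  case (Suc a)
  have "x ^ (2 ^ (j * Suc a)) = (x ^ (2 ^ j)) ^ (2 ^ (j * a))"
    by (simp only: mult_Suc_right power_add power_mult)
  then show ?case
    using Suc assms by simp
qed simp

lemma frobenius_fixed_points:
  assumes "CARD('a::{field,finite}) = 2 ^ n" "n > 0" "coprime k n"
    and "x ^ (2 ^ k) = (x::'a)"
  shows "x = 0 \<or> x = 1"
proof -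
  obtain a b where "n * a = k * b + 1"
    using bezout_nat[of n k] assms(2,3) by (auto simp: coprime_commute)
  have "x = x ^ (2 ^ (n * a))"
    using power_two_power_mult_eq_self[of x n a] power_card_eq_self[of x] assms(1) by simp
  also have "\<dots> = (x ^ (2 ^ (k * b))) ^ 2"
  proof -
    have "(2::nat) ^ (n * a) = 2 ^ (k * b) * 2"
      by (simp add: \<open>n * a = k * b + 1\<close>)
    then show ?thesis
      by (simp only: power_mult)
  qed
  also have "\<dots> = x ^ 2"
    using power_two_power_mult_eq_self[OF assms(4)] by simp
  finally have "x * (x - 1) = 0"
    by (simp add: power2_eq_square algebra_simps)
  then show ?thesis
    by simp
qed

lemma inj_power_two_power_minus_1:
  assumes "CARD('a::{field,finite}) = 2 ^ n" "n > 0" "k > 0" "coprime k n"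
  shows "inj (\<lambda>x::'a. x ^ (2 ^ k - 1))"
proof (rule injI)
  fix x y :: 'a
  assume eq: "x ^ (2 ^ k - 1) = y ^ (2 ^ k - 1)"
  have pos: "2 ^ k - 1 \<noteq> (0::nat)"
    using assms(3) one_less_power[of "2::nat" k] by simp
  show "x = y"
  proof (cases "y = 0")
    case True
    then have "x ^ (2 ^ k - 1) = 0"
      using eq pos by (simp add: power_0_left)
    then show ?thesis
      using True by simp
  next
    case False
    then have "x \<noteq> 0"
      using eq pos by (auto simp: power_0_left)
    have "(x / y) ^ (2 ^ k - 1) = 1"
      using eq False by (simp add: power_divide)
    then have "(x / y) ^ (2 ^ k) = x / y"
      using power_minus_mult[of "2 ^ k" "x / y"] by simp
    then have "x / y = 0 \<or> x / y = 1"
      by (rule frobenius_fixed_points[OF assms(1,2,4)])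
    then show ?thesis
      using False \<open>x \<noteq> 0\<close> by auto
  qed
qed

lemma surj_power_two_power_CHAR_2:
  assumes "CHAR('a::{field,finite}) = 2"
  shows "surj (\<lambda>x::'a. x ^ (2 ^ k))"
proof -
  have "inj (\<lambda>x::'a. x ^ (2 ^ k))"
  proof (rule injI)
    fix x y :: 'a
    assume "x ^ (2 ^ k) = y ^ (2 ^ k)"
    then have "(x + y) ^ (2 ^ k) = 0"
      by (simp add: frobenius_add_CHAR_2[OF assms] add_self_CHAR_2[OF assms])
    then show "x = y"
      by (simp add: add_eq_0_iff_CHAR_2[OF assms])
  qed
  then show ?thesis
    by (simp add: finite_UNIV_inj_surj)
qed

lemma invroot_qm1_power:
  assumes "inj (\<lambda>x::'a::field. x ^ (q - 1))"
  shows "invroot_qm1 q (w ^ (q - 1)) = inverse (w::'a)"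
proof -
  have "root_qm1 q (w ^ (q - 1)) = w"
    unfolding root_qm1_def by (rule the_equality) (use assms in \<open>auto dest: injD\<close>)
  then show ?thesis
    by (simp add: invroot_qm1_def)
qed

lemma abs_trace_power_two_power:
  assumes "CARD('a::{field,finite}) = 2 ^ n"
  shows "abs_trace n ((x::'a) ^ (2 ^ j)) = abs_trace n x"
proof (induction j)
  case (Suc j)
  have shift: "abs_trace n (y ^ 2) = abs_trace n y" for y :: 'a
  proof -
    have "y + abs_trace n (y ^ 2) = y + (\<Sum>i<n. y ^ (2 ^ Suc i))"
      by (simp add: abs_trace_def power_mult[symmetric] mult.commute)
    also have "\<dots> = (\<Sum>i<Suc n. y ^ (2 ^ i))"
      by (simp only: sum.lessThan_Suc_shift) simp
    also have "\<dots> = y + abs_trace n y"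
      using power_card_eq_self[of y] assms by (simp add: abs_trace_def)
    finally show ?thesis
      by simp
  qed
  have "x ^ (2 ^ Suc j) = (x ^ (2 ^ j)) ^ 2"
    by (simp add: power_mult[symmetric] mult.commute)
  then show ?case
    using shift Suc by simp
qed simp

lemma abs_trace_add:
  assumes "CHAR('a::field) = 2"
  shows "abs_trace n (x + y) = abs_trace n x + abs_trace n (y::'a)"
  unfolding abs_trace_def using frobenius_add_CHAR_2[OF assms] by (simp add: sum.distrib)

lemma abs_trace_add_power_two_power:
  assumes "CARD('a::{field,finite}) = 2 ^ n" "CHAR('a) = 2"
  shows "abs_trace n ((x::'a) + x ^ (2 ^ j)) = 0"
  using abs_trace_add[OF assms(2)] abs_trace_power_two_power[OF assms(1)] add_self_CHAR_2[OF assms(2)]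
  by simp

subsection \<open>The affine equation y^q + w y + w = 0\<close>

lemma affine_root_sum_power:
  fixes w y y' :: "'a::field"
  assumes "CHAR('a) = 2" "q = 2 ^ k"
    and "y ^ q + w * y + w = 0" "y' ^ q + w * y' + w = 0"
  shows "(y + y') ^ q = w * (y + y')"
proof -
  have "y ^ q = w * y + w" "y' ^ q = w * y' + w"
    using assms(3,4) add_eq_0_iff_CHAR_2[OF assms(1)] by (metis add.assoc)+
  then show ?thesis
    using frobenius_add_CHAR_2[OF assms(1,2)] add_self_CHAR_2[OF assms(1), of w]
    by (simp add: algebra_simps)
qed

lemma affine_roots_eq:
  fixes w y0 \<delta> :: "'a::field"
  assumes "CHAR('a) = 2" "q = 2 ^ k" "inj (\<lambda>x::'a. x ^ (q - 1))"
    and "\<delta> \<noteq> 0" "\<delta> ^ q = w * \<delta>" "y0 ^ q + w * y0 + w = 0"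
  shows "{y. y ^ q + w * y + w = 0} = {y0, y0 + \<delta>}"
proof (intro set_eqI iffI)
  fix y
  assume "y \<in> {y. y ^ q + w * y + w = 0}"
  then have sum: "(y + y0) ^ q = w * (y + y0)"
    using affine_root_sum_power[OF assms(1,2)] assms(6) by blast
  have pow: "x ^ q = x ^ (q - 1) * x" for x :: 'a
    using power_minus_mult[of q x] assms(2) by simp
  show "y \<in> {y0, y0 + \<delta>}"
  proof (cases "y + y0 = 0")
    case False
    then have "(y + y0) ^ (q - 1) = \<delta> ^ (q - 1)"
      using sum assms(4,5) pow by (metis mult_right_cancel)
    then have "y + y0 = \<delta>"
      using assms(3) by (auto dest: injD)
    then have "y = y0 + \<delta>"
      using add_self_CHAR_2[OF assms(1), of y0] by (metis add.assoc add.commute add_0_right)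
    then show ?thesis
      by simp
  qed (simp add: add_eq_0_iff_CHAR_2[OF assms(1)])
next
  fix y
  assume "y \<in> {y0, y0 + \<delta>}"
  moreover have "(y0 + \<delta>) ^ q + w * (y0 + \<delta>) + w = (y0 ^ q + w * y0 + w) + (\<delta> ^ q + w * \<delta>)"
    using frobenius_add_CHAR_2[OF assms(1,2)] by (simp add: algebra_simps)
  ultimately show "y \<in> {y. y ^ q + w * y + w = 0}"
    using assms(5,6) add_self_CHAR_2[OF assms(1)] by auto
qed

lemma normalised_affine_root:
  fixes w y \<delta> :: "'a::field"
  assumes "CHAR('a) = 2" "q = 2 ^ k"
    and "\<delta> \<noteq> 0" "\<delta> ^ q = w * \<delta>" "y ^ q + w * y + w = 0"
  shows "(y / \<delta>) ^ q + y / \<delta> = inverse \<delta>"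
proof -
  have "w \<noteq> 0"
    using assms(3,4) by auto
  have "y ^ q = w * y + w"
    using assms(5) add_eq_0_iff_CHAR_2[OF assms(1)] by (metis add.assoc)
  then have "(y / \<delta>) ^ q = y / \<delta> + inverse \<delta>"
    using assms(3,4) \<open>w \<noteq> 0\<close> by (simp add: power_divide field_simps)
  then show ?thesis
    using add_self_CHAR_2[OF assms(1)] by (simp add: add.assoc)
qed

lemma two_affine_roots_normalised:
  fixes w y2 y3 :: "'a::field"
  assumes "CHAR('a) = 2" "q = 2 ^ k" "inj (\<lambda>x::'a. x ^ (q - 1))"
    and "y2 \<noteq> y3" "y2 ^ q + w * y2 + w = 0" "y3 ^ q + w * y3 + w = 0"
  obtains m p where "p \<noteq> 0" "m ^ q + m = p" "w = inverse p ^ (q - 1)"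
    "y2 = m / p" "y3 = (m + 1) / p" "{y. y ^ q + w * y + w = 0} = {y2, y3}"
proof -
  define \<delta> where "\<delta> = y2 + y3"
  have "\<delta> \<noteq> 0"
    using assms(4) add_eq_0_iff_CHAR_2[OF assms(1)] by (simp add: \<delta>_def)
  have \<delta>q: "\<delta> ^ q = w * \<delta>"
    unfolding \<delta>_def by (rule affine_root_sum_power[OF assms(1,2,5,6)])
  have "y2 + \<delta> = y3"
    using add_self_CHAR_2[OF assms(1), of y2] by (simp add: \<delta>_def flip: add.assoc)
  show thesis
  proof (rule that)
    show "inverse \<delta> \<noteq> 0"
      using \<open>\<delta> \<noteq> 0\<close> by simp
    show "(y2 / \<delta>) ^ q + y2 / \<delta> = inverse \<delta>"
      by (rule normalised_affine_root[OF assms(1,2) \<open>\<delta> \<noteq> 0\<close> \<delta>q assms(5)])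
    show "w = inverse (inverse \<delta>) ^ (q - 1)"
      using \<delta>q \<open>\<delta> \<noteq> 0\<close> power_minus_mult[of q \<delta>] assms(2) by simp
    show "y2 = y2 / \<delta> / inverse \<delta>" "y3 = (y2 / \<delta> + 1) / inverse \<delta>"
      using \<open>\<delta> \<noteq> 0\<close> \<open>y2 + \<delta> = y3\<close> by (auto simp: field_simps)
    show "{y. y ^ q + w * y + w = 0} = {y2, y3}"
      using affine_roots_eq[OF assms(1-3) \<open>\<delta> \<noteq> 0\<close> \<delta>q assms(5)] \<open>y2 + \<delta> = y3\<close> by simp
  qed
qed

subsection \<open>Roots of (v + 1)^(q+1) + c v = 0\<close>

lemma shifted_root_equation:
  fixes c v z :: "'a::field"
  assumes "CHAR('a) = 2" "q = 2 ^ k"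
    and root: "(v + 1) ^ (q + 1) + c * v = 0" and "z \<noteq> 0"
  shows "v * ((z + v + 1) ^ (q + 1) + c * (z + v))
       = z ^ (q + 1) * (((v + 1) / z) ^ q + v * ((v + 1) / z) + v)"
proof -
  define A where "A = (v + 1) ^ q"
  have frob: "(z + v + 1) ^ q = z ^ q + A"
    using frobenius_add_CHAR_2[OF assms(1,2), of z "v + 1"] by (simp add: A_def add.assoc)
  have cv: "c * v = - (A * (v + 1))"
    using root unfolding A_def Suc_eq_plus1[symmetric] power_Suc2
    by (simp add: eq_neg_iff_add_eq_0 add.commute)
  have "(z + v + 1) ^ (q + 1) = (z ^ q + A) * (z + v + 1)"
    using frob by (metis power_Suc2 Suc_eq_plus1)
  then have "v * ((z + v + 1) ^ (q + 1) + c * (z + v)) = v * ((z ^ q + A) * (z + v + 1)) + c * v * (z + v)"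
    by (simp add: algebra_simps)
  also have "\<dots> = v * (z ^ q + A) * (z + v + 1) - A * (v + 1) * (z + v)"
    unfolding cv by (simp add: algebra_simps)
  also have "\<dots> = z ^ (q + 1) * (((v + 1) / z) ^ q + v * ((v + 1) / z) + v) - 2 * A * z"
    using \<open>z \<noteq> 0\<close> by (simp add: A_def power_divide field_simps)
  finally show ?thesis
    using of_nat_CHAR[where 'a='a] assms(1) by simp
qed

lemma root_set_eq_insert_shifted_affine_roots:
  fixes c v1 :: "'a::field"
  assumes "CHAR('a) = 2" "q = 2 ^ k"
    and root: "(v1 + 1) ^ (q + 1) + c * v1 = 0" and "v1 \<noteq> 0" "v1 \<noteq> 1"
  shows "{v. (v + 1) ^ (q + 1) + c * v = 0}
       = insert v1 ((\<lambda>y. (v1 + 1) / y + v1) ` {y. y ^ q + v1 * y + v1 = 0})"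
proof (intro set_eqI iffI)
  have X: "v1 + 1 \<noteq> 0"
    using assms(5) add_eq_0_iff_CHAR_2[OF assms(1)] by simp
  have shift: "(z + v1 + 1) ^ (q + 1) + c * (z + v1) = 0
      \<longleftrightarrow> ((v1 + 1) / z) ^ q + v1 * ((v1 + 1) / z) + v1 = 0" if "z \<noteq> 0" for z
    using shifted_root_equation[OF assms(1,2) root that] assms(4) that by auto
  {
    fix v
    assume v: "v \<in> {v. (v + 1) ^ (q + 1) + c * v = 0}"
    show "v \<in> insert v1 ((\<lambda>y. (v1 + 1) / y + v1) ` {y. y ^ q + v1 * y + v1 = 0})"
    proof (cases "v = v1")
      case False
      define z where "z = v + v1"
      have "z \<noteq> 0" "v = z + v1"
        using False add_eq_0_iff_CHAR_2[OF assms(1)] add_self_CHAR_2[OF assms(1)]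
        by (auto simp: z_def add.assoc)
      then have "((v1 + 1) / z) ^ q + v1 * ((v1 + 1) / z) + v1 = 0"
        using shift v by simp
      moreover have "v = (v1 + 1) / ((v1 + 1) / z) + v1"
        using X \<open>z \<noteq> 0\<close> \<open>v = z + v1\<close> by simp
      ultimately show ?thesis
        by blast
    qed simp
  }
  fix v
  assume "v \<in> insert v1 ((\<lambda>y. (v1 + 1) / y + v1) ` {y. y ^ q + v1 * y + v1 = 0})"
  then consider "v = v1" | y where "y ^ q + v1 * y + v1 = 0" "v = (v1 + 1) / y + v1"
    by blast
  then show "v \<in> {v. (v + 1) ^ (q + 1) + c * v = 0}"
  proof cases
    case 2
    then have "y \<noteq> 0"
      using assms(2,4) by (auto simp: power_0_left)
    then show ?thesis
      using shift[of "(v1 + 1) / y"] X 2 by simp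
  qed (use root in simp)
qed

lemma shifted_root_param:
  fixes m p :: "'a::field"
  assumes "CHAR('a) = 2" "q = 2 ^ k"
    and "m \<noteq> 0" "p \<noteq> 0" "m ^ q + m = p"
  shows "(inverse p ^ (q - 1) + 1) / (m / p) + inverse p ^ (q - 1) = (m ^ (q + 1) / p) ^ (q - 1)"
proof -
  define P where "P = p ^ (q - 1)"
  have "P \<noteq> 0"
    using assms(4) by (simp add: P_def)
  have pq: "p ^ q = p * P"
    using power_minus_mult[of q p] assms(2) by (simp add: P_def mult.commute)
  have "p ^ q = m ^ (q * q) + m ^ q"
    using frobenius_add_CHAR_2[OF assms(1,2), of "m ^ q" m] assms(5) by (simp add: power_mult)
  then have "m + p + p ^ q = (m + m) + (m ^ q + m ^ q) + m ^ (q * q)"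
    by (simp add: assms(5)[symmetric] add_ac)
  then have sum: "m + p + p ^ q = m ^ (q * q)"
    by (simp add: add_self_CHAR_2[OF assms(1)])
  have exp: "q * q - 1 = (q + 1) * (q - 1)"
    by (cases q) simp_all
  have "m ^ (q * q) = m * m ^ (q * q - 1)"
    using power_minus_mult[of "q * q" m] assms(2) by (simp add: mult.commute)
  then have "(inverse p ^ (q - 1) + 1) / (m / p) + inverse p ^ (q - 1) = m ^ (q * q - 1) / P"
    using sum pq \<open>P \<noteq> 0\<close> assms(3,4) by (simp add: P_def power_inverse field_simps)
  also have "\<dots> = (m ^ (q + 1)) ^ (q - 1) / P"
    using exp by (simp only: power_mult)
  finally show ?thesis
    by (simp add: P_def power_divide)
qed

lemma three_roots_parametrisation:
  fixes c v1 v2 v3 :: "'a::field"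
  assumes "CHAR('a) = 2" "q = 2 ^ k" "inj (\<lambda>x::'a. x ^ (q - 1))"
    and "v1 \<noteq> v2" "v1 \<noteq> v3" "v2 \<noteq> v3"
    and roots: "(v1 + 1) ^ (q + 1) + c * v1 = 0" "(v2 + 1) ^ (q + 1) + c * v2 = 0"
      "(v3 + 1) ^ (q + 1) + c * v3 = 0"
  obtains m where "m \<noteq> 0" "m \<noteq> 1"
    "{v. (v + 1) ^ (q + 1) + c * v = 0}
     = {inverse (m ^ q + m) ^ (q - 1), (m ^ (q + 1) / (m ^ q + m)) ^ (q - 1),
        ((m + 1) ^ (q + 1) / (m ^ q + m)) ^ (q - 1)}"
proof -
  note char = assms(1) and q = assms(2)
  have "c \<noteq> 0"
  proof
    assume "c = 0"
    then have "v = 1" if "(v + 1) ^ (q + 1) + c * v = 0" for v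
      using that by (auto simp: add_eq_0_iff_CHAR_2[OF char])
    then show False
      using roots(1,2) assms(4) by blast
  qed
  then have "v1 \<noteq> 1"
    using roots(1) add_self_CHAR_2[OF char, of 1] by auto
  have "v1 \<noteq> 0"
    using roots(1) by auto
  define shift where "shift y = (v1 + 1) / y + v1" for y
  note root_set = root_set_eq_insert_shifted_affine_roots[OF char q roots(1) \<open>v1 \<noteq> 0\<close> \<open>v1 \<noteq> 1\<close>,
      folded shift_def]
  have "v \<in> shift ` {y. y ^ q + v1 * y + v1 = 0}"
    if "(v + 1) ^ (q + 1) + c * v = 0" "v \<noteq> v1" for v
  proof -
    have "v \<in> {v. (v + 1) ^ (q + 1) + c * v = 0}"
      using that(1) by simp
    then show ?thesis
      using that(2) unfolding root_set by blast
  qed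
  then obtain y2 y3 where y2: "y2 ^ q + v1 * y2 + v1 = 0" "v2 = shift y2"
    and y3: "y3 ^ q + v1 * y3 + v1 = 0" "v3 = shift y3"
    using roots(2,3) assms(4,5) by blast
  then have "y2 \<noteq> y3"
    using assms(6) by blast
  then obtain m p where "p \<noteq> 0" and mp: "m ^ q + m = p" and v1: "v1 = inverse p ^ (q - 1)"
    and "y2 = m / p" "y3 = (m + 1) / p" and affine_roots: "{y. y ^ q + v1 * y + v1 = 0} = {y2, y3}"
    using two_affine_roots_normalised[OF char q assms(3) _ y2(1) y3(1)] by blast
  have "y2 \<noteq> 0" "y3 \<noteq> 0"
    using y2(1) y3(1) \<open>v1 \<noteq> 0\<close> q by (auto simp: power_0_left)
  then have "m \<noteq> 0" "m + 1 \<noteq> 0"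
    using \<open>y2 = m / p\<close> \<open>y3 = (m + 1) / p\<close> by auto
  have mp1: "(m + 1) ^ q + (m + 1) = p"
    using mp frobenius_add_CHAR_2[OF char q, of m 1] add_self_CHAR_2[OF char, of 1]
    by (simp add: add_ac)
  have "{v. (v + 1) ^ (q + 1) + c * v = 0} = {v1, shift (m / p), shift ((m + 1) / p)}"
    unfolding root_set affine_roots \<open>y2 = m / p\<close> \<open>y3 = (m + 1) / p\<close> by simp
  also have "\<dots> = {inverse p ^ (q - 1), (m ^ (q + 1) / p) ^ (q - 1), ((m + 1) ^ (q + 1) / p) ^ (q - 1)}"
    using shifted_root_param[OF char q] mp mp1 \<open>m \<noteq> 0\<close> \<open>m + 1 \<noteq> 0\<close> \<open>p \<noteq> 0\<close>
    by (simp add: shift_def v1)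
  finally show thesis
    using that \<open>m \<noteq> 0\<close> \<open>m + 1 \<noteq> 0\<close> mp add_eq_0_iff_CHAR_2[OF char, of m 1] by simp
qed

lemma power_plus_self_divide:
  assumes "(x::'a::field) \<noteq> 0"
  shows "(x ^ q + x) / x ^ (q + 1) = inverse x + inverse x ^ q"
proof -
  have "(x ^ q + x) / x ^ (q + 1) = x ^ q / (x ^ q * x) + x / (x * x ^ q)"
    by (simp add: add_divide_distrib mult.commute)
  also have "\<dots> = inverse x + inverse x ^ q"
    using assms by (simp add: power_one_over inverse_eq_divide)
  finally show ?thesis .
qed

lemma invroot_qm1_param_roots:
  fixes m :: "'a::field"
  assumes "CHAR('a) = 2" "q = 2 ^ k" "inj (\<lambda>x::'a. x ^ (q - 1))" "m \<noteq> 0" "m \<noteq> 1"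
  shows "invroot_qm1 q (inverse (m ^ q + m) ^ (q - 1)) = m ^ q + m"
    "invroot_qm1 q ((m ^ (q + 1) / (m ^ q + m)) ^ (q - 1)) = inverse m + inverse m ^ q"
    "invroot_qm1 q (((m + 1) ^ (q + 1) / (m ^ q + m)) ^ (q - 1))
       = inverse (m + 1) + inverse (m + 1) ^ q"
proof -
  note invroot = invroot_qm1_power[OF assms(3)]
  have "m + 1 \<noteq> 0" "(m + 1) ^ q + (m + 1) = m ^ q + m"
    using assms(5) frobenius_add_CHAR_2[OF assms(1,2), of m 1] add_self_CHAR_2[OF assms(1), of 1]
    by (auto simp: add_eq_0_iff_CHAR_2[OF assms(1)] add_ac)
  moreover have "invroot_qm1 q ((x ^ (q + 1) / (m ^ q + m)) ^ (q - 1)) = inverse x + inverse x ^ q"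
    if "x \<noteq> 0" "x ^ q + x = m ^ q + m" for x
    unfolding invroot inverse_divide using that power_plus_self_divide[of x q] by simp
  ultimately show "invroot_qm1 q ((m ^ (q + 1) / (m ^ q + m)) ^ (q - 1)) = inverse m + inverse m ^ q"
    "invroot_qm1 q (((m + 1) ^ (q + 1) / (m ^ q + m)) ^ (q - 1))
       = inverse (m + 1) + inverse (m + 1) ^ q"
    using assms(4) by simp_all
  show "invroot_qm1 q (inverse (m ^ q + m) ^ (q - 1)) = m ^ q + m"
    by (simp only: invroot inverse_inverse_eq)
qed

lemma power_square_minus_self: "x ^ (q ^ 2 - q) = ((x::'a::monoid_mult) ^ q) ^ (q - 1)"
proof -
  have "q ^ 2 - q = q * (q - 1)"
    by (simp add: power2_eq_square diff_mult_distrib2)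
  then show ?thesis
    by (simp only: power_mult)
qed

lemma power_cube_minus_self: "x ^ (q ^ 3 - q) = (((x::'a::monoid_mult) ^ q) ^ (q + 1)) ^ (q - 1)"
proof -
  have "q ^ 3 - q = q * (q + 1) * (q - 1)"
    by (cases q) (simp_all add: power3_eq_cube algebra_simps)
  then show ?thesis
    by (simp only: power_mult)
qed

lemma param_roots_frobenius_preimage:
  fixes u m :: "'a::field"
  assumes "CHAR('a) = 2" "q = 2 ^ k" "u ^ q = m"
  shows "1 / (u + u ^ q) ^ (q ^ 2 - q) = inverse (m ^ q + m) ^ (q - 1)"
    "u ^ (q ^ 3 - q) / (u + u ^ q) ^ (q ^ 2 - q) = (m ^ (q + 1) / (m ^ q + m)) ^ (q - 1)"
    "(u + 1) ^ (q ^ 3 - q) / (u + u ^ q) ^ (q ^ 2 - q)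
       = ((m + 1) ^ (q + 1) / (m ^ q + m)) ^ (q - 1)"
    "u ^ q + u ^ (q ^ 2) = m ^ q + m"
    "inverse (u ^ q) + inverse (u ^ (q ^ 2)) = inverse m + inverse m ^ q"
    "inverse ((u + 1) ^ q) + inverse ((u + 1) ^ (q ^ 2)) = inverse (m + 1) + inverse (m + 1) ^ q"
proof -
  have frob: "(u + 1) ^ q = m + 1" "(u + u ^ q) ^ q = m ^ q + m"
    using assms(3) frobenius_add_CHAR_2[OF assms(1,2)] by (simp_all add: add.commute)
  show "1 / (u + u ^ q) ^ (q ^ 2 - q) = inverse (m ^ q + m) ^ (q - 1)"
    "u ^ (q ^ 3 - q) / (u + u ^ q) ^ (q ^ 2 - q) = (m ^ (q + 1) / (m ^ q + m)) ^ (q - 1)"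
    "(u + 1) ^ (q ^ 3 - q) / (u + u ^ q) ^ (q ^ 2 - q)
       = ((m + 1) ^ (q + 1) / (m ^ q + m)) ^ (q - 1)"
    unfolding power_square_minus_self[of "u + u ^ q"] power_cube_minus_self power_divide
    using assms(3) frob by (simp_all add: power_one_over inverse_eq_divide)
  have "u ^ (q ^ 2) = m ^ q" "(u + 1) ^ (q ^ 2) = (m + 1) ^ q"
    using assms(3) frob by (simp_all add: power2_eq_square power_mult)
  then show "u ^ q + u ^ (q ^ 2) = m ^ q + m"
    "inverse (u ^ q) + inverse (u ^ (q ^ 2)) = inverse m + inverse m ^ q"
    "inverse ((u + 1) ^ q) + inverse ((u + 1) ^ (q ^ 2)) = inverse (m + 1) + inverse (m + 1) ^ q"
    using assms(3) frob by (simp_all add: add.commute power_inverse)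
qed

theorem mainTheorem3:
  fixes n k q :: nat and c :: "'a::{field,finite}"
  assumes card: "CARD('a) = 2 ^ n"
    and nodd: "odd n"
    and kpos: "k > 0"
    and cop: "coprime k n"
    and qdef: "q = 2 ^ k"
    and three: "\<exists>v1 v2 v3 :: 'a. v1 \<noteq> v2 \<and> v1 \<noteq> v3 \<and> v2 \<noteq> v3 \<and>
                 (v1 + 1) ^ (q + 1) + c * v1 = 0 \<and>
                 (v2 + 1) ^ (q + 1) + c * v2 = 0 \<and>
                 (v3 + 1) ^ (q + 1) + c * v3 = 0"
  shows "(\<forall>v :: 'a. (v + 1) ^ (q + 1) + c * v = 0 \<longrightarrow> abs_trace n (invroot_qm1 q v) = 0)
    \<and> (\<exists>u :: 'a. u \<noteq> 0 \<and> u \<noteq> 1 \<and>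
         (let v1 = 1 / (u + u ^ q) ^ (q ^ 2 - q);
              v2 = u ^ (q ^ 3 - q) / (u + u ^ q) ^ (q ^ 2 - q);
              v3 = (u + 1) ^ (q ^ 3 - q) / (u + u ^ q) ^ (q ^ 2 - q)
          in {v. (v + 1) ^ (q + 1) + c * v = 0} = {v1, v2, v3}
             \<and> invroot_qm1 q v1 = u ^ q + u ^ (q ^ 2)
             \<and> invroot_qm1 q v2 = inverse (u ^ q) + inverse (u ^ (q ^ 2))
             \<and> invroot_qm1 q v3 = inverse ((u + 1) ^ q) + inverse ((u + 1) ^ (q ^ 2))))"
proof -
  \<comment> \<open>Oddness of n is only needed to rule out the degenerate case n = 0.\<close>
  have "n > 0"
    using nodd by (cases n) auto
  have char: "CHAR('a) = 2"
    by (rule CHAR_eq_2_if_card[OF card \<open>n > 0\<close>])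
  have inj: "inj (\<lambda>x::'a. x ^ (q - 1))"
    using inj_power_two_power_minus_1[OF card \<open>n > 0\<close> kpos cop] qdef by simp
  obtain m :: 'a where "m \<noteq> 0" "m \<noteq> 1" and roots:
    "{v. (v + 1) ^ (q + 1) + c * v = 0}
     = {inverse (m ^ q + m) ^ (q - 1), (m ^ (q + 1) / (m ^ q + m)) ^ (q - 1),
        ((m + 1) ^ (q + 1) / (m ^ q + m)) ^ (q - 1)}"
    using three three_roots_parametrisation[OF char qdef inj] by blast
  have "m \<in> range (\<lambda>x. x ^ q)"
    using surj_power_two_power_CHAR_2[OF char, of k] qdef by simp
  then obtain u :: 'a where u: "u ^ q = m"
    by blast
  have "abs_trace n (x + x ^ q) = 0" for x :: 'a
    using abs_trace_add_power_two_power[OF card char] qdef by simp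
  then have "\<forall>v\<in>{v. (v + 1) ^ (q + 1) + c * v = 0}. abs_trace n (invroot_qm1 q v) = 0"
    unfolding roots using invroot_qm1_param_roots[OF char qdef inj \<open>m \<noteq> 0\<close> \<open>m \<noteq> 1\<close>]
    by (simp add: add.commute)
  moreover have "u \<noteq> 0" "u \<noteq> 1"
    using u \<open>m \<noteq> 0\<close> \<open>m \<noteq> 1\<close> qdef by auto
  ultimately show ?thesis
    using roots invroot_qm1_param_roots[OF char qdef inj \<open>m \<noteq> 0\<close> \<open>m \<noteq> 1\<close>]
      param_roots_frobenius_preimage[OF char qdef u]
    by (auto simp: Let_def intro!: exI[of _ u])
qed

end
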